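(* Let $D$ be a nonempty subset of $\mathbb{R}^n$, let $\varepsilon\in\,]0,1[$, and let $\Lambda$ be a symmetric linear operator on $\mathbb{R}^n$ such that $$\bar\beta\,\mathrm{Id}\succeq \Lambda\succeq \underline{\beta}\,\mathrm{Id},\qquad \bar\beta,\underline\beta\in[\varepsilon,1-\varepsilon].$$ Let $R:D\to\mathbb{R}^n$ be nonexpansive, and define $T_\Lambda:D\to\mathbb{R}^n$ by $T_\Lambda \coloneqq (\mathrm{Id}-\Lambda)+\Lambda R$. Then $T_\Lambda$ is $\bar\beta$-averaged in the metric induced by $\Lambda^{-1}$, i.e., for all $x,y\in D$, $$\|T_\Lambda(x)-T_\Lambda(y)\|_{\Lambda^{-1}}^2\le \|x-y\|_{\Lambda^{-1}}^2-\frac{1-\bar\beta}{\bar\beta}\,\big\|(\mathrm{Id}-T_\Lambda)(x)-(\mathrm{Id}-T_\Lambda)(y)\big\|_{\Lambda^{-1}}^2 .$$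
   Context: For a symmetric positive-definite matrix $W$, $\|x\|_W^2\coloneqq\langle x,Wx\rangle$. An operator $R$ is nonexpansive if $\|R(x)-R(y)\|\le\|x-y\|$ for all $x,y$ in its domain. $A\succeq B$ means $A-B$ is positive semidefinite. Operators $T_\Lambda$ of this form are called operator-weighted averaged operators. *)

theory Defs
  imports "HOL-Analysis.Analysis"
begin

definition wnorm2 :: "real^'n^'n \<Rightarrow> real^'n \<Rightarrow> real" where
  "wnorm2 W x = x \<bullet> (W *v x)"

definition psd :: "real^'n^'n \<Rightarrow> bool" where
  "psd M \<longleftrightarrow> (\<forall>v. 0 \<le> v \<bullet> (M *v v))"

definition loewner_ge :: "real^'n^'n \<Rightarrow> real^'n^'n \<Rightarrow> bool" where
  "loewner_ge A B \<longleftrightarrow> psd (A - B)"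

definition nonexpansive_on :: "(real^'n) set \<Rightarrow> (real^'n \<Rightarrow> real^'n) \<Rightarrow> bool" where
  "nonexpansive_on D R \<longleftrightarrow> (\<forall>x\<in>D. \<forall>y\<in>D. norm (R x - R y) \<le> norm (x - y))"

end

theory Submission
  imports Defs
begin

text \<open>With \<open>u = x - y\<close> and \<open>d = u - (R x - R y)\<close>, one has \<open>T x - T y = u - \<Lambda> d\<close> and
  \<open>(Id - T) x - (Id - T) y = \<Lambda> d\<close>. In the \<open>\<Lambda>\<^sup>-\<^sup>1\<close>-metric the claim then reduces to
  \<open>\<langle>d, \<Lambda> d\<rangle> / \<beta>u \<le> 2 \<langle>u, d\<rangle>\<close>, which follows from \<open>\<Lambda> \<preceq> \<beta>u Id\<close> together with
  \<open>\<parallel>d\<parallel>\<^sup>2 \<le> 2 \<langle>u, d\<rangle>\<close>, i.e. the nonexpansiveness \<open>\<parallel>u - d\<parallel> \<le> \<parallel>u\<parallel>\<close> of \<open>R\<close>.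
  The lower bound \<open>\<Lambda> \<succeq> \<beta>l Id\<close> with \<open>\<beta>l > 0\<close> only serves to make \<open>\<Lambda>\<close> invertible.\<close>

lemma symmetric_matrix_inner_adjoint:
  fixes A :: "real^'n^'n"
  assumes "transpose A = A"
  shows "(A *v a) \<bullet> b = a \<bullet> (A *v b)"
  by (metis assms dot_lmul_matrix vector_transpose_matrix)

lemma scaled_identity_mult_vector: "(c *\<^sub>R mat 1) *v v = c *\<^sub>R (v :: real^'n)"
  by (metis matrix_vector_mul_lid scaleR_matrix_vector_assoc)

lemma loewner_ge_scaled_identity_quadratic_form:
  fixes A :: "real^'n^'n"
  assumes "loewner_ge (c *\<^sub>R mat 1) A"
  shows "v \<bullet> (A *v v) \<le> c * (v \<bullet> v)"
proof -
  have "0 \<le> v \<bullet> ((c *\<^sub>R mat 1 - A) *v v)"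
    using assms unfolding loewner_ge_def psd_def by blast
  then show ?thesis
    by (simp add: matrix_vector_mult_diff_rdistrib inner_diff_right scaled_identity_mult_vector)
qed

lemma quadratic_form_ge_if_loewner_ge_scaled_identity:
  fixes A :: "real^'n^'n"
  assumes "loewner_ge A (c *\<^sub>R mat 1)"
  shows "c * (v \<bullet> v) \<le> v \<bullet> (A *v v)"
proof -
  have "0 \<le> v \<bullet> ((A - c *\<^sub>R mat 1) *v v)"
    using assms unfolding loewner_ge_def psd_def by blast
  then show ?thesis
    by (simp add: matrix_vector_mult_diff_rdistrib inner_diff_right scaled_identity_mult_vector)
qed

lemma invertible_if_loewner_ge_scaled_identity:
  fixes A :: "real^'n^'n"
  assumes "loewner_ge A (c *\<^sub>R mat 1)" and "0 < c"
  shows "invertible A"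
proof -
  have "v = 0" if "A *v v = 0" for v
  proof -
    have "c * (v \<bullet> v) \<le> 0"
      using quadratic_form_ge_if_loewner_ge_scaled_identity[OF assms(1), of v] that by simp
    with \<open>0 < c\<close> have "v \<bullet> v \<le> 0"
      by (simp add: mult_le_0_iff)
    then show "v = 0"
      by (metis inner_eq_zero_iff inner_ge_zero order_antisym)
  qed
  then show ?thesis
    using matrix_left_invertible_ker invertible_left_inverse by blast
qed

lemma matrix_inv_mult_vector:
  fixes A :: "real^'n^'n"
  assumes "invertible A"
  shows "A *v (matrix_inv A *v v) = v" and "matrix_inv A *v (A *v v) = v"
proof -
  have "A ** matrix_inv A = mat 1 \<and> matrix_inv A ** A = mat 1"
    using assms unfolding matrix_inv_def invertible_def by (rule someI_ex)
  then show "A *v (matrix_inv A *v v) = v" and "matrix_inv A *v (A *v v) = v"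
    by (metis matrix_vector_mul_assoc matrix_vector_mul_lid)+
qed

lemma wnorm2_inverse_diff:
  fixes \<Lambda> :: "real^'n^'n"
  assumes "transpose \<Lambda> = \<Lambda>" and "invertible \<Lambda>"
  shows "wnorm2 (matrix_inv \<Lambda>) (u - \<Lambda> *v d)
           = wnorm2 (matrix_inv \<Lambda>) u - 2 * (u \<bullet> d) + d \<bullet> (\<Lambda> *v d)"
proof -
  let ?W = "matrix_inv \<Lambda>"
  have "(\<Lambda> *v d) \<bullet> (?W *v u) = d \<bullet> u"
    using symmetric_matrix_inner_adjoint[OF assms(1)] matrix_inv_mult_vector[OF assms(2)] by simp
  then show ?thesis
    unfolding wnorm2_def
    by (simp add: matrix_vector_mult_diff_distrib inner_diff_left inner_diff_right
        matrix_inv_mult_vector[OF assms(2)] inner_commute)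
qed

lemma wnorm2_inverse_image:
  fixes \<Lambda> :: "real^'n^'n"
  assumes "invertible \<Lambda>"
  shows "wnorm2 (matrix_inv \<Lambda>) (\<Lambda> *v d) = d \<bullet> (\<Lambda> *v d)"
  unfolding wnorm2_def by (simp add: matrix_inv_mult_vector[OF assms] inner_commute)

lemma inner_le_twice_if_norm_diff_le:
  fixes u d :: "'a::real_inner"
  assumes "norm (u - d) \<le> norm u"
  shows "d \<bullet> d \<le> 2 * (u \<bullet> d)"
  using assms by (simp add: norm_le inner_diff_left inner_diff_right inner_commute)

lemma wnorm2_inverse_averaged_step:
  fixes \<Lambda> :: "real^'n^'n"
  assumes "transpose \<Lambda> = \<Lambda>" and "invertible \<Lambda>"
    and "loewner_ge (\<beta> *\<^sub>R mat 1) \<Lambda>" and "0 < \<beta>"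
    and "d \<bullet> d \<le> 2 * (u \<bullet> d)"
  shows "wnorm2 (matrix_inv \<Lambda>) (u - \<Lambda> *v d)
           \<le> wnorm2 (matrix_inv \<Lambda>) u - ((1 - \<beta>) / \<beta>) * wnorm2 (matrix_inv \<Lambda>) (\<Lambda> *v d)"
proof -
  let ?q = "d \<bullet> (\<Lambda> *v d)"
  have "?q \<le> \<beta> * (2 * (u \<bullet> d))"
    using loewner_ge_scaled_identity_quadratic_form[OF assms(3), of d] assms(4,5)
    by (smt (verit) mult_left_mono)
  then have "?q / \<beta> \<le> 2 * (u \<bullet> d)"
    using assms(4) by (simp add: divide_le_eq mult.commute)
  moreover have "(1 - \<beta>) / \<beta> * ?q = ?q / \<beta> - ?q"
    using assms(4) by (simp add: field_simps)
  ultimately show ?thesis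
    by (simp add: wnorm2_inverse_diff[OF assms(1,2)] wnorm2_inverse_image[OF assms(2)])
qed

theorem proposition1:
  fixes D :: "(real^'n) set" and \<epsilon> \<beta>u \<beta>l :: real
    and \<Lambda> :: "real^'n^'n" and R :: "real^'n \<Rightarrow> real^'n"
  assumes "D \<noteq> {}"
    and "0 < \<epsilon>" and "\<epsilon> < 1"
    and "transpose \<Lambda> = \<Lambda>"
    and "loewner_ge (\<beta>u *\<^sub>R mat 1) \<Lambda>"
    and "loewner_ge \<Lambda> (\<beta>l *\<^sub>R mat 1)"
    and "\<epsilon> \<le> \<beta>u" and "\<beta>u \<le> 1 - \<epsilon>"
    and "\<epsilon> \<le> \<beta>l" and "\<beta>l \<le> 1 - \<epsilon>"
    and "nonexpansive_on D R"
    and "T = (\<lambda>x. (x - \<Lambda> *v x) + \<Lambda> *v R x)"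
    and "x \<in> D" and "y \<in> D"
  shows "wnorm2 (matrix_inv \<Lambda>) (T x - T y)
         \<le> wnorm2 (matrix_inv \<Lambda>) (x - y)
            - ((1 - \<beta>u) / \<beta>u) * wnorm2 (matrix_inv \<Lambda>) ((x - T x) - (y - T y))"
proof -
  define u where "u = x - y"
  define d where "d = u - (R x - R y)"
  have "invertible \<Lambda>"
    using invertible_if_loewner_ge_scaled_identity assms(2,6,9) by force
  have "norm (u - d) \<le> norm u"
    using assms(11,13,14) unfolding nonexpansive_on_def u_def d_def by simp
  then have "d \<bullet> d \<le> 2 * (u \<bullet> d)"
    by (rule inner_le_twice_if_norm_diff_le)
  then have "wnorm2 (matrix_inv \<Lambda>) (u - \<Lambda> *v d)
      \<le> wnorm2 (matrix_inv \<Lambda>) u - ((1 - \<beta>u) / \<beta>u) * wnorm2 (matrix_inv \<Lambda>) (\<Lambda> *v d)"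
    using wnorm2_inverse_averaged_step assms(2,4,5,7) \<open>invertible \<Lambda>\<close> by force
  moreover have "T x - T y = u - \<Lambda> *v d" and "(x - T x) - (y - T y) = \<Lambda> *v d"
    unfolding assms(12) u_def d_def by (simp_all add: matrix_vector_mult_diff_distrib algebra_simps)
  ultimately show ?thesis
    by (simp add: u_def)
qed

end
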